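(* Let $V$ be a finite-dimensional normed mixed lattice space (i.e. its topology is given by a mixed lattice norm). If the cone $V_{sp}$ is generating ($V=V_{sp}-V_{sp}$), then $(V,\preccurlyeq)$ is a lattice.
   Context: A mixed lattice vector space $(V,\le,\preccurlyeq)$ is a real vector space $V$ with two partial orderings $\le$ (initial order) and $\preccurlyeq$ (specific order), each making $V$ a partially ordered vector space, with positive cones $V_p=\{x:0\le x\}$, $V_{sp}=\{x:0\preccurlyeq x\}$, such that: (1) for all $x,y$ the elements $x\curlyvee y=\min\{w: w\succcurlyeq x,\ w\ge y\}$ and $x\curlywedge y=\max\{w: w\preccurlyeq x,\ w\le y\}$ exist (min/max with respect to $\le$); (2) $x\preccurlyeq y$ implies $x\le y$; (3) $x\curlyvee y, x\curlywedge y\in V_{sp}$ whenever $x,y\in V_{sp}$. Notation: $x^u=0\curlyvee x$, $x^l=0\curlyvee(-x)$, $s(x)=x^u+x^l$. A norm $\rho$ on $V$ is a mixed lattice norm if $s(x)\le s(y)$ implies $\rho(x)\le\rho(y)$. *)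

theory Defs
  imports "HOL-Analysis.Analysis"
begin

definition pordered_vs :: "('a::real_vector \<Rightarrow> 'a \<Rightarrow> bool) \<Rightarrow> bool" where
  "pordered_vs R \<longleftrightarrow>
     (\<forall>x. R x x) \<and>
     (\<forall>x y. R x y \<and> R y x \<longrightarrow> x = y) \<and>
     (\<forall>x y z. R x y \<and> R y z \<longrightarrow> R x z) \<and>
     (\<forall>x y z. R x y \<longrightarrow> R (x + z) (y + z)) \<and>
     (\<forall>x y (c::real). R x y \<and> 0 \<le> c \<longrightarrow> R (c *\<^sub>R x) (c *\<^sub>R y))"

definition is_least_wrt :: "('a \<Rightarrow> 'a \<Rightarrow> bool) \<Rightarrow> 'a set \<Rightarrow> 'a \<Rightarrow> bool" where
  "is_least_wrt R S w \<longleftrightarrow> w \<in> S \<and> (\<forall>v\<in>S. R w v)"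

definition is_greatest_wrt :: "('a \<Rightarrow> 'a \<Rightarrow> bool) \<Rightarrow> 'a set \<Rightarrow> 'a \<Rightarrow> bool" where
  "is_greatest_wrt R S w \<longleftrightarrow> w \<in> S \<and> (\<forall>v\<in>S. R v w)"

definition mup :: "('a \<Rightarrow> 'a \<Rightarrow> bool) \<Rightarrow> ('a \<Rightarrow> 'a \<Rightarrow> bool) \<Rightarrow> 'a \<Rightarrow> 'a \<Rightarrow> 'a" where
  "mup le sle x y = (THE w. is_least_wrt le {w. sle x w \<and> le y w} w)"

definition mlow :: "('a \<Rightarrow> 'a \<Rightarrow> bool) \<Rightarrow> ('a \<Rightarrow> 'a \<Rightarrow> bool) \<Rightarrow> 'a \<Rightarrow> 'a \<Rightarrow> 'a" where
  "mlow le sle x y = (THE w. is_greatest_wrt le {w. sle w x \<and> le w y} w)"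

text \<open>Mixed lattice vector space (V, le, sle): le is the initial order, sle the specific order.\<close>
definition mixed_lattice_vs :: "('a::real_vector \<Rightarrow> 'a \<Rightarrow> bool) \<Rightarrow> ('a \<Rightarrow> 'a \<Rightarrow> bool) \<Rightarrow> bool" where
  "mixed_lattice_vs le sle \<longleftrightarrow>
     pordered_vs le \<and> pordered_vs sle \<and>
     (\<forall>x y. \<exists>w. is_least_wrt le {w. sle x w \<and> le y w} w) \<and>
     (\<forall>x y. \<exists>w. is_greatest_wrt le {w. sle w x \<and> le w y} w) \<and>
     (\<forall>x y. sle x y \<longrightarrow> le x y) \<and>
     (\<forall>x y. sle 0 x \<and> sle 0 y \<longrightarrow> sle 0 (mup le sle x y) \<and> sle 0 (mlow le sle x y))"

definition ml_s :: "('a::real_vector \<Rightarrow> 'a \<Rightarrow> bool) \<Rightarrow> ('a \<Rightarrow> 'a \<Rightarrow> bool) \<Rightarrow> 'a \<Rightarrow> 'a" where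
  "ml_s le sle x = mup le sle 0 x + mup le sle 0 (- x)"

definition mixed_lattice_norm ::
  "('a::real_vector \<Rightarrow> 'a \<Rightarrow> bool) \<Rightarrow> ('a \<Rightarrow> 'a \<Rightarrow> bool) \<Rightarrow> ('a \<Rightarrow> real) \<Rightarrow> bool" where
  "mixed_lattice_norm le sle \<rho> \<longleftrightarrow>
     (\<forall>x y. le (ml_s le sle x) (ml_s le sle y) \<longrightarrow> \<rho> x \<le> \<rho> y)"

definition generating_cone :: "('a::real_vector \<Rightarrow> 'a \<Rightarrow> bool) \<Rightarrow> bool" where
  "generating_cone R \<longleftrightarrow> (\<forall>x. \<exists>a b. R 0 a \<and> R 0 b \<and> x = a - b)"

definition is_lattice_order :: "('a \<Rightarrow> 'a \<Rightarrow> bool) \<Rightarrow> bool" where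
  "is_lattice_order R \<longleftrightarrow>
     (\<forall>x y. \<exists>s. is_least_wrt R {w. R x w \<and> R y w} s) \<and>
     (\<forall>x y. \<exists>i. is_greatest_wrt R {w. R w x \<and> R w y} i)"

end

theory Submission
  imports Defs
begin

text \<open>Let \<open>x, y\<close> be given and let \<open>U\<close> be the set of their common \<open>\<preccurlyeq>\<close>-upper bounds, which is
  nonempty because \<open>V\<^sub>s\<^sub>p\<close> is generating. Both cones are closed for a mixed lattice norm, and
  \<open>0 \<le> a \<le> b\<close> implies \<open>\<rho> a \<le> \<rho> b\<close>, so for \<open>z \<in> U\<close> the set \<open>{w \<in> U. w \<le> z}\<close> is closed
  and bounded, hence compact in finite dimension. Since \<open>U\<close> is closed under \<open>\<curlywedge>\<close>, it is
  downward directed for \<open>\<le>\<close>, and the finite intersection property yields a \<open>\<le>\<close>-least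
  element \<open>a\<close> of \<open>U\<close>. For \<open>v \<in> U\<close> minimality forces \<open>v \<curlywedge> a = a\<close>, i.e. \<open>a \<preccurlyeq> v\<close>; so \<open>a\<close> is the
  supremum, and infima are obtained from suprema by negation.\<close>

lemma closed_if_compact_Int_cball:
  fixes T :: "'a::real_normed_vector set"
  assumes "\<And>R. compact (T \<inter> cball 0 R)"
  shows "closed T"
proof -
  have "x \<in> T" if x: "x \<in> closure T" for x
  proof -
    have "x \<in> ball 0 (norm x + 1) \<inter> closure T" using x by simp
    also have "\<dots> \<subseteq> closure (ball 0 (norm x + 1) \<inter> T)"
      by (rule open_Int_closure_subset) simp
    also have "\<dots> \<subseteq> closure (T \<inter> cball 0 (norm x + 1))"
      by (intro closure_mono) auto
    also have "\<dots> = T \<inter> cball 0 (norm x + 1)"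
      using assms compact_imp_closed closure_closed by blast
    finally show ?thesis by blast
  qed
  then show ?thesis using closure_subset_eq by blast
qed

lemma abs_mult_infdist_le_norm:
  fixes b y :: "'a::real_normed_vector"
  assumes "subspace S" "y \<in> S"
  shows "\<bar>t\<bar> * infdist b S \<le> norm (t *\<^sub>R b + y)"
proof (cases "t = 0")
  case False
  have "- ((1/t) *\<^sub>R y) \<in> S" using assms by (simp add: subspace_neg subspace_scale)
  then have "infdist b S \<le> norm (b - - ((1/t) *\<^sub>R y))"
    using infdist_le dist_norm by metis
  also have "b - - ((1/t) *\<^sub>R y) = (1/t) *\<^sub>R (t *\<^sub>R b + y)"
    using False by (simp add: algebra_simps)
  also have "norm \<dots> = norm (t *\<^sub>R b + y) / \<bar>t\<bar>" by simp
  finally show ?thesis using False by (simp add: field_simps)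
qed simp

text \<open>Writing \<open>z = t b + y\<close> with \<open>y \<in> span B\<close>, the positive distance \<open>d\<close> of \<open>b\<close> from the closed
  subspace \<open>span B\<close> bounds \<open>\<bar>t\<bar> \<le> \<parallel>z\<parallel>/d\<close>, so the ball in \<open>span (insert b B)\<close> lies in the
  continuous image of a compact box \<open>[-R/d, R/d] \<times> (span B \<inter> cball 0 R')\<close>.\<close>
lemma compact_span_insert_Int_cball:
  fixes b :: "'a::real_normed_vector"
  assumes IH: "\<And>R. compact (span B \<inter> cball 0 R)" and b: "b \<notin> span B"
  shows "compact (span (insert b B) \<inter> cball 0 R)"
proof -
  define d where "d = infdist b (span B)"
  have "d > 0" unfolding d_def
    using infdist_pos_not_in_closed closed_if_compact_Int_cball[OF IH] span_zero b by blast
  define C where "C = (\<lambda>p. fst p *\<^sub>R b + snd p) `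
    ({-R/d..R/d} \<times> (span B \<inter> cball 0 (R + R/d * norm b)))"
  have "compact C" unfolding C_def
    by (intro compact_continuous_image continuous_intros compact_Times IH compact_Icc)
  have "C \<subseteq> span (insert b B)"
  proof
    fix z assume "z \<in> C"
    then obtain t y where "z = t *\<^sub>R b + y" "y \<in> span B" unfolding C_def by auto
    then show "z \<in> span (insert b B)"
      by (metis span_add span_base span_mono span_scale insertI1 subset_insertI subsetD)
  qed
  moreover have "z \<in> C" if z: "z \<in> span (insert b B)" "norm z \<le> R" for z
  proof -
    obtain t where y: "z - t *\<^sub>R b \<in> span B" using z by (auto simp: span_insert)
    have "\<bar>t\<bar> * d \<le> R"
      using abs_mult_infdist_le_norm[OF subspace_span y, of t b] z(2) by (simp add: d_def)
    then have t: "\<bar>t\<bar> \<le> R / d" using \<open>d > 0\<close> by (simp add: field_simps)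
    have "norm (z - t *\<^sub>R b) \<le> norm z + \<bar>t\<bar> * norm b"
      using norm_triangle_ineq4[of z "t *\<^sub>R b"] by simp
    also have "\<dots> \<le> R + R/d * norm b"
      using z(2) mult_right_mono[OF t norm_ge_zero[of b]] by simp
    finally show ?thesis
      unfolding C_def using y t by (auto intro!: image_eqI[of _ _ "(t, z - t *\<^sub>R b)"])
  qed
  ultimately have "span (insert b B) \<inter> cball 0 R = C \<inter> cball 0 R" by auto
  then show ?thesis using \<open>compact C\<close> by (simp add: compact_Int_closed)
qed

lemma compact_span_Int_cball:
  fixes B :: "'a::real_normed_vector set"
  assumes "finite B"
  shows "compact (span B \<inter> cball 0 R)"
  using assms
proof (induction arbitrary: R rule: finite_induct)
  case empty
  show ?case by (intro compact_Int_closed) auto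
next
  case (insert b B)
  then show ?case
    by (cases "b \<in> span B") (simp_all add: span_redundant compact_span_insert_Int_cball)
qed

lemma compact_if_finite_span_UNIV:
  fixes B S :: "'a::real_normed_vector set"
  assumes "finite B" "span B = UNIV" "bounded S" "closed S"
  shows "compact S"
proof -
  obtain R where "\<forall>x\<in>S. norm x \<le> R" using assms(3) bounded_pos by blast
  then have "S = (span B \<inter> cball 0 R) \<inter> S" using assms(2) by auto
  then show ?thesis using compact_Int_closed[OF compact_span_Int_cball[OF assms(1)] assms(4)]
    by metis
qed

lemma zero_if_norm_le_dist_closure:
  fixes v x :: "'a::real_normed_vector"
  assumes "x \<in> closure S" "\<And>p. p \<in> S \<Longrightarrow> norm v \<le> dist p x"
  shows "v = 0"
proof -
  have "norm v \<le> e" if "e > 0" for e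
    using assms that unfolding closure_approachable by (meson less_le_not_le order_trans)
  then show ?thesis by (metis norm_le_zero_iff field_le_epsilon add_0)
qed

lemma directed_has_minimum_if_compact:
  fixes R :: "'a::topological_space \<Rightarrow> 'a \<Rightarrow> bool"
  assumes "reflp R" "transp R"
    and closed: "\<And>v. closed {w. R w v}"
    and "z \<in> U" and compact: "compact (U \<inter> {w. R w z})"
    and directed: "\<And>v v'. v \<in> U \<Longrightarrow> v' \<in> U \<Longrightarrow> \<exists>m\<in>U. R m v \<and> R m v'"
  shows "\<exists>a\<in>U. \<forall>v\<in>U. R a v"
proof -
  have lower_bound: "\<exists>m\<in>U. R m z \<and> (\<forall>v\<in>F. R m v)" if "finite F" "F \<subseteq> U" for F
    using that
  proof (induction rule: finite_induct)
    case empty then show ?case using \<open>z \<in> U\<close> \<open>reflp R\<close> by (auto dest: reflpD)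
  next
    case (insert v F)
    then obtain m where m: "m \<in> U" "R m z" "\<forall>v\<in>F. R m v" by blast
    moreover obtain m' where "m' \<in> U" "R m' m" "R m' v" using directed insert.prems m(1) by blast
    ultimately have "R m' z" "\<forall>v\<in>F. R m' v" using \<open>transp R\<close> by (auto dest: transpD)
    with \<open>m' \<in> U\<close> \<open>R m' v\<close> show ?case by blast
  qed
  have "(U \<inter> {w. R w z}) \<inter> (\<Inter>v\<in>U. {w. R w v}) \<noteq> {}"
  proof (rule compact_imp_fip_image[OF compact closed])
    fix F assume "finite F" "F \<subseteq> U"
    then obtain m where "m \<in> U" "R m z" "\<forall>v\<in>F. R m v" using lower_bound by blast
    then show "(U \<inter> {w. R w z}) \<inter> (\<Inter>v\<in>F. {w. R w v}) \<noteq> {}" by blast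
  qed
  then show ?thesis by auto
qed

lemma pordered_vsD:
  assumes "pordered_vs R"
  shows pordered_vs_refl: "R x x"
    and pordered_vs_antisym: "R x y \<Longrightarrow> R y x \<Longrightarrow> x = y"
    and pordered_vs_trans: "R x y \<Longrightarrow> R y z \<Longrightarrow> R x z"
    and pordered_vs_add_right: "R x y \<Longrightarrow> R (x + c) (y + c)"
  using assms unfolding pordered_vs_def by blast+

lemma pordered_vs_iff_diff_pos:
  assumes "pordered_vs R"
  shows "R x y \<longleftrightarrow> R 0 (y - x)"
  using pordered_vs_add_right[OF assms, of x y "- x"] pordered_vs_add_right[OF assms, of 0 "y - x" x]
  by auto

lemma pordered_vs_neg:
  assumes "pordered_vs R" "R x y"
  shows "R (- y) (- x)"
proof -
  have "- x - - y = y - x" by simp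
  then show ?thesis using assms pordered_vs_iff_diff_pos[OF assms(1)] by metis
qed

lemma pordered_vs_add_mono:
  assumes "pordered_vs R" "R a b" "R c d"
  shows "R (a + c) (b + d)"
proof -
  have "R (a + c) (b + c)" "R (c + b) (d + b)"
    using assms pordered_vs_add_right[OF assms(1)] by blast+
  then show ?thesis using pordered_vs_trans[OF assms(1)] by (simp add: add.commute)
qed

lemma pordered_vs_add_pos:
  assumes "pordered_vs R" "R 0 a" "R 0 b"
  shows "R 0 (a + b)"
  using pordered_vs_add_mono[OF assms] by simp

lemma pordered_vs_common_upper_bound:
  assumes "pordered_vs R" "generating_cone R"
  shows "\<exists>z. R x z \<and> R y z"
proof -
  obtain a b c d where "R 0 a" "R 0 b" "x = a - b" "R 0 c" "R 0 d" "y = c - d"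
    using assms(2) unfolding generating_cone_def by metis
  moreover have "a + c - x = b + c" "a + c - y = a + d" using \<open>x = a - b\<close> \<open>y = c - d\<close> by simp_all
  ultimately have "R 0 (a + c - x)" "R 0 (a + c - y)"
    using pordered_vs_add_pos[OF assms(1)] by simp_all
  then show ?thesis using pordered_vs_iff_diff_pos[OF assms(1)] by blast
qed

lemma is_lattice_order_if_sups:
  assumes "pordered_vs R" and sup: "\<And>x y. \<exists>s. is_least_wrt R {w. R x w \<and> R y w} s"
  shows "is_lattice_order R"
  unfolding is_lattice_order_def
proof (intro conjI allI)
  fix x y
  obtain s where s: "is_least_wrt R {w. R (- x) w \<and> R (- y) w} s" using sup by blast
  have "is_greatest_wrt R {w. R w x \<and> R w y} (- s)"
    unfolding is_greatest_wrt_def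
  proof (intro conjI ballI)
    show "- s \<in> {w. R w x \<and> R w y}"
      using s pordered_vs_neg[OF assms(1), of "- x" s] pordered_vs_neg[OF assms(1), of "- y" s]
      unfolding is_least_wrt_def by simp
    fix w assume "w \<in> {w. R w x \<and> R w y}"
    then have "R s (- w)" using s pordered_vs_neg[OF assms(1)] unfolding is_least_wrt_def by simp
    then show "R w (- s)" using pordered_vs_neg[OF assms(1), of s "- w"] by simp
  qed
  then show "\<exists>i. is_greatest_wrt R {w. R w x \<and> R w y} i" by blast
qed (rule sup)

lemma the_least_wrt:
  assumes "pordered_vs R" "is_least_wrt R S w"
  shows "(THE w. is_least_wrt R S w) = w"
  using assms pordered_vs_antisym[OF assms(1)] unfolding is_least_wrt_def by (intro the_equality) blast+

lemma the_greatest_wrt: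
  assumes "pordered_vs R" "is_greatest_wrt R S w"
  shows "(THE w. is_greatest_wrt R S w) = w"
  using assms pordered_vs_antisym[OF assms(1)] unfolding is_greatest_wrt_def by (intro the_equality) blast+

locale mixed_lattice =
  fixes le sle :: "'a::real_vector \<Rightarrow> 'a \<Rightarrow> bool"
  assumes mixed_lattice: "mixed_lattice_vs le sle"
begin

lemma le_order: "pordered_vs le" and sle_order: "pordered_vs sle"
  and sle_imp_le: "sle x y \<Longrightarrow> le x y"
  and mlow_pos: "sle 0 x \<Longrightarrow> sle 0 y \<Longrightarrow> sle 0 (mlow le sle x y)"
  using mixed_lattice unfolding mixed_lattice_vs_def by blast+

lemma reflp_le: "reflp le" and transp_le: "transp le"
  using pordered_vs_refl[OF le_order] pordered_vs_trans[OF le_order]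
  by (auto intro: reflpI transpI)

lemma mup_least: "is_least_wrt le {w. sle x w \<and> le y w} (mup le sle x y)"
proof -
  obtain w where "is_least_wrt le {w. sle x w \<and> le y w} w"
    using mixed_lattice unfolding mixed_lattice_vs_def by blast
  then show ?thesis unfolding mup_def using the_least_wrt[OF le_order] by simp
qed

lemma mlow_greatest: "is_greatest_wrt le {w. sle w x \<and> le w y} (mlow le sle x y)"
proof -
  obtain w where "is_greatest_wrt le {w. sle w x \<and> le w y} w"
    using mixed_lattice unfolding mixed_lattice_vs_def by blast
  then show ?thesis unfolding mlow_def using the_greatest_wrt[OF le_order] by simp
qed

lemma mup_sle: "sle x (mup le sle x y)" and mup_le: "le y (mup le sle x y)"
  and mup_least_le: "sle x w \<Longrightarrow> le y w \<Longrightarrow> le (mup le sle x y) w"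
  using mup_least[of x y] unfolding is_least_wrt_def by auto

lemma mlow_sle: "sle (mlow le sle x y) x" and mlow_le: "le (mlow le sle x y) y"
  and mlow_greatest_le: "sle w x \<Longrightarrow> le w y \<Longrightarrow> le w (mlow le sle x y)"
  using mlow_greatest[of x y] unfolding is_greatest_wrt_def by auto

lemma mup_eqI:
  "sle x w \<Longrightarrow> le y w \<Longrightarrow> (\<And>w'. sle x w' \<Longrightarrow> le y w' \<Longrightarrow> le w w') \<Longrightarrow> mup le sle x y = w"
  using mup_least_le[of x w y] mup_sle mup_le pordered_vs_antisym[OF le_order] by blast

lemma mlow_add_right: "mlow le sle (x + c) (y + c) = mlow le sle x y + c"
proof (rule pordered_vs_antisym[OF le_order])
  let ?m = "mlow le sle (x + c) (y + c)"
  have "sle (?m - c) x" "le (?m - c) y"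
    using pordered_vs_add_right[OF sle_order mlow_sle, of "x + c" "y + c" "- c"]
      pordered_vs_add_right[OF le_order mlow_le, of "x + c" "y + c" "- c"] by simp_all
  then show "le ?m (mlow le sle x y + c)"
    using pordered_vs_add_right[OF le_order mlow_greatest_le, of "?m - c" x y c] by simp
  show "le (mlow le sle x y + c) ?m"
    by (intro mlow_greatest_le pordered_vs_add_right[OF sle_order mlow_sle]
        pordered_vs_add_right[OF le_order mlow_le])
qed

lemma mlow_sle_upper_bound:
  assumes "sle x z" "sle x a"
  shows "sle x (mlow le sle z a)"
proof -
  have "sle 0 (mlow le sle (z + - x) (a + - x))"
    using assms mlow_pos pordered_vs_iff_diff_pos[OF sle_order] by simp
  then show ?thesis
    unfolding mlow_add_right using pordered_vs_iff_diff_pos[OF sle_order, of x] by simp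
qed

lemma is_least_wrt_sle_if_le_minimal:
  assumes "a \<in> U" "\<forall>v\<in>U. le a v" and U: "U = {w. sle x w \<and> sle y w}"
  shows "is_least_wrt sle U a"
  unfolding is_least_wrt_def
proof (intro conjI ballI)
  fix z assume "z \<in> U"
  then have "mlow le sle z a \<in> U" using \<open>a \<in> U\<close> mlow_sle_upper_bound U by blast
  then have "mlow le sle z a = a"
    using assms(2) mlow_le pordered_vs_antisym[OF le_order] by blast
  then show "sle a z" using mlow_sle[of z a] by simp
qed (fact \<open>a \<in> U\<close>)

abbreviation upper :: "'a \<Rightarrow> 'a" where "upper x \<equiv> mup le sle 0 x"

lemma upper_eq_self: "sle 0 v \<Longrightarrow> upper v = v"
  by (rule mup_eqI) (auto simp: pordered_vs_refl[OF le_order] sle_imp_le)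

lemma upper_neg_eq_0: "le 0 v \<Longrightarrow> upper (- v) = 0"
  by (rule mup_eqI)
    (auto simp: pordered_vs_refl[OF sle_order] sle_imp_le pordered_vs_neg[OF le_order, of 0, simplified])

lemma upper_mono: "le a b \<Longrightarrow> le (upper a) (upper b)"
  by (metis le_order mup_le mup_least_le mup_sle pordered_vs_trans)

lemma upper_pos: "le 0 (upper v)"
  using sle_imp_le mup_sle by blast

lemma upper_subadditive: "le (upper (a + b)) (upper a + upper b)"
  by (intro mup_least_le pordered_vs_add_pos[OF sle_order] mup_sle
      pordered_vs_add_mono[OF le_order] mup_le)

lemma ml_s_eq: "ml_s le sle v = upper v + upper (- v)"
  by (simp add: ml_s_def)

lemma ml_s_pos: "sle 0 (ml_s le sle v)"
  unfolding ml_s_eq by (intro pordered_vs_add_pos[OF sle_order] mup_sle)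

lemma ml_s_idem: "ml_s le sle (ml_s le sle v) = ml_s le sle v"
  using upper_eq_self[OF ml_s_pos] upper_neg_eq_0[OF sle_imp_le[OF ml_s_pos]]
  by (simp add: ml_s_eq[of "ml_s le sle v"])

lemma ml_s_of_pos: "le 0 v \<Longrightarrow> ml_s le sle v = upper v"
  by (simp add: ml_s_eq upper_neg_eq_0)

lemma upper_le_ml_s: "le (upper v) (ml_s le sle v)"
proof -
  have "le (upper v + 0) (upper v + upper (- v))"
    by (rule pordered_vs_add_mono[OF le_order pordered_vs_refl[OF le_order] upper_pos])
  then show ?thesis by (simp add: ml_s_eq)
qed

lemma upper_diff_le_ml_s: "le (upper v - v) (ml_s le sle v)"
proof -
  have "le (upper v + - v) (upper v + upper (- v))"
    using pordered_vs_add_mono[OF le_order pordered_vs_refl[OF le_order] mup_le[of "- v" 0]] .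
  then show ?thesis unfolding ml_s_eq by simp
qed

end

locale normed_mixed_lattice = mixed_lattice le sle
  for le sle :: "'a::real_normed_vector \<Rightarrow> 'a \<Rightarrow> bool" +
  assumes mixed_lattice_norm: "mixed_lattice_norm le sle norm"
begin

lemma norm_ml_s: "norm (ml_s le sle v) = norm v"
  using mixed_lattice_norm ml_s_idem[of v] pordered_vs_refl[OF le_order]
  unfolding mixed_lattice_norm_def by (metis order_antisym)

lemma norm_mono:
  assumes "le 0 a" "le a b"
  shows "norm a \<le> norm b"
proof -
  have "le 0 b" using assms pordered_vs_trans[OF le_order] by blast
  then have "le (ml_s le sle a) (ml_s le sle b)"
    using upper_mono[OF assms(2)] ml_s_of_pos assms(1) by simp
  then show ?thesis using mixed_lattice_norm unfolding mixed_lattice_norm_def by blast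
qed

lemma norm_le_if_le_ml_s: "le 0 a \<Longrightarrow> le a (ml_s le sle v) \<Longrightarrow> norm a \<le> norm v"
  using norm_mono norm_ml_s by metis

text \<open>Closedness of both cones comes from the same estimate: the distance from \<open>x\<close> to a
  positive \<open>p\<close> dominates the norm of the part of \<open>x\<close> that violates positivity.\<close>
lemma closed_le_cone: "closed {v. le 0 v}"
proof -
  have "x \<in> {v. le 0 v}" if x: "x \<in> closure {v. le 0 v}" for x
  proof -
    have "norm (upper (- x)) \<le> dist p x" if "le 0 p" for p
    proof -
      have "le (upper (- x)) (upper (p - x))"
        using upper_mono pordered_vs_add_right[OF le_order that, of "- x"] by simp
      then have "le (upper (- x)) (ml_s le sle (p - x))"
        using upper_le_ml_s pordered_vs_trans[OF le_order] by blast
      then show ?thesis using norm_le_if_le_ml_s upper_pos by (simp add: dist_norm)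
    qed
    then have "upper (- x) = 0" using zero_if_norm_le_dist_closure[OF x] by blast
    then have "le (- x) 0" using mup_le[of "- x" 0] by simp
    then show ?thesis using pordered_vs_neg[OF le_order] by fastforce
  qed
  then show ?thesis using closure_subset_eq by blast
qed

lemma closed_sle_cone: "closed {v. sle 0 v}"
proof -
  have "x \<in> {v. sle 0 v}" if x: "x \<in> closure {v. sle 0 v}" for x
  proof -
    have "norm (upper x - x) \<le> dist p x" if "sle 0 p" for p
    proof -
      have "le (upper x) (p + upper (x - p))"
        using upper_subadditive[of p "x - p"] upper_eq_self[OF that] by simp
      then have "le (upper x - x) (upper (x - p) - (x - p))"
        using pordered_vs_add_right[OF le_order, of _ _ "- x"] by (simp add: algebra_simps)
      then have "le (upper x - x) (ml_s le sle (x - p))"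
        using upper_diff_le_ml_s pordered_vs_trans[OF le_order] by blast
      moreover have "le 0 (upper x - x)"
        using mup_le[of x 0] pordered_vs_iff_diff_pos[OF le_order] by blast
      ultimately have "norm (upper x - x) \<le> norm (x - p)" using norm_le_if_le_ml_s by blast
      then show ?thesis by (metis dist_commute dist_norm)
    qed
    then have "upper x = x" using zero_if_norm_le_dist_closure[OF x] by force
    then show ?thesis using mup_sle[of 0 x] by simp
  qed
  then show ?thesis using closure_subset_eq by blast
qed

lemma closed_le_lower_set: "closed {w. le w c}"
proof -
  have "{w. le w c} = (\<lambda>w. c - w) -` {v. le 0 v}"
    using pordered_vs_iff_diff_pos[OF le_order] by auto
  moreover have "closed ((\<lambda>w. c - w) -` {v. le 0 v})"
    by (intro continuous_closed_vimage closed_le_cone continuous_intros)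
  ultimately show ?thesis by simp
qed

lemma closed_sle_upper_set: "closed {w. sle c w}"
proof -
  have "{w. sle c w} = (\<lambda>w. w - c) -` {v. sle 0 v}"
    using pordered_vs_iff_diff_pos[OF sle_order] by auto
  moreover have "closed ((\<lambda>w. w - c) -` {v. sle 0 v})"
    by (intro continuous_closed_vimage closed_sle_cone continuous_intros)
  ultimately show ?thesis by simp
qed

lemma sle_sup_exists:
  fixes B :: "'a set"
  assumes "finite B" "span B = UNIV" "generating_cone sle"
  shows "\<exists>s. is_least_wrt sle {w. sle x w \<and> sle y w} s"
proof -
  define U where "U = {w. sle x w \<and> sle y w}"
  obtain z where "z \<in> U"
    using pordered_vs_common_upper_bound[OF sle_order assms(3)] unfolding U_def by blast
  have "U \<inter> {w. le w z} \<subseteq> cball x (norm (z - x))"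
  proof
    fix w assume "w \<in> U \<inter> {w. le w z}"
    then have "le 0 (w - x)" "le (w - x) (z - x)"
      using sle_imp_le pordered_vs_iff_diff_pos[OF le_order]
        pordered_vs_add_right[OF le_order, of w z "- x"]
      unfolding U_def by auto
    then have "norm (w - x) \<le> norm (z - x)" by (rule norm_mono)
    then show "w \<in> cball x (norm (z - x))" by (simp add: dist_norm norm_minus_commute)
  qed
  moreover have "closed (U \<inter> {w. le w z})"
    unfolding U_def using closed_sle_upper_set closed_le_lower_set by (simp add: Collect_conj_eq closed_Int)
  ultimately have compact: "compact (U \<inter> {w. le w z})"
    using compact_if_finite_span_UNIV[OF assms(1,2)] bounded_subset bounded_cball by blast
  have directed: "\<exists>m\<in>U. le m v \<and> le m v'" if "v \<in> U" "v' \<in> U" for v v'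
  proof
    show "mlow le sle v v' \<in> U" using that mlow_sle_upper_bound unfolding U_def by blast
    show "le (mlow le sle v v') v \<and> le (mlow le sle v v') v'"
      using sle_imp_le[OF mlow_sle] mlow_le by blast
  qed
  obtain a where "a \<in> U" "\<forall>v\<in>U. le a v"
    using directed_has_minimum_if_compact[OF reflp_le transp_le closed_le_lower_set \<open>z \<in> U\<close>
        compact directed] by blast
  then have "is_least_wrt sle U a" by (rule is_least_wrt_sle_if_le_minimal[OF _ _ U_def])
  then show ?thesis unfolding U_def by blast
qed

end

theorem theorem4p11:
  fixes le sle :: "'a::real_normed_vector \<Rightarrow> 'a \<Rightarrow> bool"
  assumes "\<exists>B. finite B \<and> span B = (UNIV :: 'a set)"
    and "mixed_lattice_vs le sle"
    and "mixed_lattice_norm le sle norm"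
    and "generating_cone sle"
  shows "is_lattice_order sle"
proof -
  interpret normed_mixed_lattice le sle
    using assms(2,3) by unfold_locales
  obtain B :: "'a set" where "finite B" "span B = UNIV" using assms(1) by blast
  then show ?thesis
    using is_lattice_order_if_sups[OF sle_order] sle_sup_exists assms(4) by blast
qed

end
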